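(* Let $m\ge 1$ and $n\ge m$. Let $\mathcal{A}$ be any deterministic adaptive procedure that makes at most $2^m-2$ oracle queries, each query being a string $\mathbf{y}\in\{0,1\}^m$ answered by whether $\mathbf{y}\in C(f)$. Then there exist fully balanced functions $f,g:\{0,1\}^n\to\{0,1\}^m$ with $\dim\operatorname{img}(f)=m$ and $\dim\operatorname{img}(g)=m-1$ such that $\mathcal{A}$ makes the same queries and receives the same answers on $f$ as on $g$. In particular, no such procedure distinguishes the cases $r=m-1$ and $r=m$ with certainty using fewer than $2^m-1$ queries.
   Context: Strings in $\{0,1\}^k$ are identified with vectors of $\mathbb{F}_2^k$; $\mathbf{a}\cdot\mathbf{b}=\bigoplus_i a_ib_i$ (mod 2). $f$ is $\mathbf{y}$-balanced if $f(\mathbf{x})\cdot\mathbf{y}=0$ for exactly half of the $\mathbf{x}$ and $=1$ for the other half, and $\mathbf{y}$-constant if $f(\mathbf{x})\cdot\mathbf{y}$ is the same for all $\mathbf{x}$. $f$ is fully balanced if for every $\mathbf{y}$ it is $\mathbf{y}$-balanced or $\mathbf{y}$-constant; then $\operatorname{img}(f)$ is an affine subspace, and $r$ denotes its dimension. $C(f)=\{\mathbf{y}: f\text{ is }\mathbf{y}\text{-constant}\}$. A query corresponds to one run of the Generalised Phase Kick-Back algorithm with marker $\mathbf{y}$, whose output is $\mathbf{0}$ exactly when $f$ is $\mathbf{y}$-constant (for fully balanced $f$); a marker selection algorithm only uses whether this output is $\mathbf{0}$. *)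

theory Defs
  imports Main
begin

text \<open>Bit strings in {0,1}^k are boolean lists of length k, viewed as vectors of F_2^k
  (True = 1, coordinate-wise XOR = vector addition).\<close>

definition bvecs :: "nat \<Rightarrow> bool list set" where
  "bvecs k = {xs. length xs = k}"

definition dotp :: "bool list \<Rightarrow> bool list \<Rightarrow> bool" where
  "dotp a b = odd (length (filter id (map2 (\<and>) a b)))"

definition xorv :: "bool list \<Rightarrow> bool list \<Rightarrow> bool list" where
  "xorv a b = map2 (\<noteq>) a b"

definition y_balanced :: "nat \<Rightarrow> (bool list \<Rightarrow> bool list) \<Rightarrow> bool list \<Rightarrow> bool" where
  "y_balanced n f y \<longleftrightarrow> 2 * card {x \<in> bvecs n. dotp (f x) y} = 2 ^ n"

definition y_constant :: "nat \<Rightarrow> (bool list \<Rightarrow> bool list) \<Rightarrow> bool list \<Rightarrow> bool" where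
  "y_constant n f y \<longleftrightarrow> (\<forall>x\<in>bvecs n. \<forall>x'\<in>bvecs n. dotp (f x) y = dotp (f x') y)"

definition fully_balanced :: "nat \<Rightarrow> nat \<Rightarrow> (bool list \<Rightarrow> bool list) \<Rightarrow> bool" where
  "fully_balanced n m f \<longleftrightarrow> (\<forall>x\<in>bvecs n. f x \<in> bvecs m) \<and>
     (\<forall>y\<in>bvecs m. y_balanced n f y \<or> y_constant n f y)"

definition constset :: "nat \<Rightarrow> nat \<Rightarrow> (bool list \<Rightarrow> bool list) \<Rightarrow> bool list set" where
  "constset n m f = {y \<in> bvecs m. y_constant n f y}"

definition img :: "nat \<Rightarrow> (bool list \<Rightarrow> bool list) \<Rightarrow> bool list set" where
  "img n f = f ` bvecs n"

text \<open>Linear independence over F_2 of a finite set S of vectors in F_2^m: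
  no nonempty subset has XOR-sum zero (the i-th coordinate of the XOR-sum of T is the parity of
  the number of vectors of T whose i-th coordinate is 1).\<close>
definition f2_indep :: "nat \<Rightarrow> bool list set \<Rightarrow> bool" where
  "f2_indep m S \<longleftrightarrow> finite S \<and>
     (\<forall>T\<subseteq>S. T \<noteq> {} \<longrightarrow> (\<exists>i<m. odd (card {v\<in>T. v ! i})))"

definition f2_dim :: "nat \<Rightarrow> bool list set \<Rightarrow> nat" where
  "f2_dim m V = Max {card S | S. S \<subseteq> V \<and> f2_indep m S}"

definition aff_dim :: "nat \<Rightarrow> bool list set \<Rightarrow> nat" where
  "aff_dim m A = f2_dim m {xorv u v | u v. u \<in> A \<and> v \<in> A}"

text \<open>A deterministic adaptive query procedure: given the list of answers received so far
  (which determines the earlier queries), it either stops (None) or issues the next query.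
  transcript A orc q h runs it for at most q further queries against oracle orc,
  returning the list of (query, answer) pairs.\<close>
fun transcript :: "(bool list \<Rightarrow> bool list option) \<Rightarrow> (bool list \<Rightarrow> bool) \<Rightarrow> nat
                    \<Rightarrow> bool list \<Rightarrow> (bool list \<times> bool) list" where
  "transcript A orc 0 h = []"
| "transcript A orc (Suc k) h =
     (case A h of None \<Rightarrow> []
      | Some y \<Rightarrow> (y, orc y) # transcript A orc k (h @ [orc y]))"

end

theory Submission imports Defs begin

text \<open>A map x \<mapsto> L(x_1..x_m) with L linear on F_2^m is fully balanced, since x \<mapsto> x.z is
  balanced for z \<noteq> 0, and its set C is the kernel of the adjoint L*. Take f with L = id, so C(f) = {0}
  and img f = F_2^m. At most 2^m - 2 queries leave some nonzero y0 unasked. For g take L = P, the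
  projection onto the hyperplane y0^\<bottom> along a unit vector e_i with y0_i = 1: then P*y = 0 exactly
  for y \<in> {0, y0}, so C(g) = {0, y0} agrees with C(f) on every query asked, while img g is the
  hyperplane, of dimension m - 1.\<close>

abbreviation zerov :: "nat \<Rightarrow> bool list" where
  "zerov m \<equiv> replicate m False"

definition unitv :: "nat \<Rightarrow> nat \<Rightarrow> bool list" where
  "unitv m j = (replicate m False)[j := True]"

lemma dotp_Nil1 [simp]: "dotp [] b = False"
  by (simp add: dotp_def)

lemma dotp_Nil2 [simp]: "dotp a [] = False"
  by (simp add: dotp_def)

lemma dotp_Cons [simp]: "dotp (a # as) (b # bs) = ((a \<and> b) \<noteq> dotp as bs)"
  by (cases "a \<and> b") (auto simp: dotp_def)

lemma dotp_eq_odd_card: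
  assumes "length a = length b"
  shows "dotp a b = odd (card {k. k < length a \<and> a ! k \<and> b ! k})"
proof -
  have "{k. k < length a \<and> k < length b \<and> map2 (\<and>) a b ! k} = {k. k < length a \<and> a ! k \<and> b ! k}"
    using assms by auto
  thus ?thesis by (simp add: dotp_def length_filter_conv_card)
qed

lemma xorv_Cons [simp]: "xorv (a # as) (b # bs) = (a \<noteq> b) # xorv as bs"
  by (simp add: xorv_def)

lemma xorv_Nil [simp]: "xorv [] b = []" "xorv a [] = []"
  by (simp_all add: xorv_def)

lemma length_xorv [simp]: "length (xorv a b) = min (length a) (length b)"
  by (simp add: xorv_def)

lemma dotp_xorv_right:
  "length a = length b \<Longrightarrow> length b = length c \<Longrightarrow> dotp a (xorv b c) = (dotp a b \<noteq> dotp a c)"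
  by (induction a b c rule: list_induct3) auto

lemma dotp_xorv_left:
  "length a = length b \<Longrightarrow> length b = length c \<Longrightarrow> dotp (xorv a b) c = (dotp a c \<noteq> dotp b c)"
  by (induction a b c rule: list_induct3) auto

lemma dotp_zerov_right [simp]: "dotp a (zerov k) = False"
proof (induction a arbitrary: k)
  case (Cons x xs) thus ?case by (cases k) auto
qed simp

lemma dotp_zerov_left [simp]: "dotp (zerov k) b = False"
proof (induction b arbitrary: k)
  case (Cons x xs) thus ?case by (cases k) auto
qed simp

lemma xorv_zerov [simp]: "length a = k \<Longrightarrow> xorv a (zerov k) = a"
  by (induction a arbitrary: k) (auto simp: xorv_def)

lemma xorv_eq_zerov_iff:
  "length a = length b \<Longrightarrow> xorv a b = zerov (length a) \<longleftrightarrow> a = b"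
  by (induction a b rule: list_induct2) auto

lemma zerov_in_bvecs [simp]: "zerov m \<in> bvecs m"
  by (simp add: bvecs_def)

lemma nth_unitv: "j < m \<Longrightarrow> k < m \<Longrightarrow> unitv m j ! k = (k = j)"
  by (auto simp: unitv_def nth_list_update)

lemma length_unitv [simp]: "length (unitv m j) = m"
  by (simp add: unitv_def)

lemma dotp_unitv_left:
  assumes "length y = m" "j < m"
  shows "dotp (unitv m j) y = y ! j"
proof -
  have "{k. k < length (unitv m j) \<and> unitv m j ! k \<and> y ! k} = (if y ! j then {j} else {})"
    using assms by (auto simp: nth_unitv)
  thus ?thesis using assms by (simp add: dotp_eq_odd_card)
qed

lemma flip_eq_xorv_unitv: "length a = m \<Longrightarrow> j < m \<Longrightarrow> a[j := \<not> a ! j] = xorv a (unitv m j)"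
  by (auto simp: list_eq_iff_nth_eq nth_list_update xorv_def nth_unitv)

lemma nonzero_has_True: "z \<in> bvecs m \<Longrightarrow> z \<noteq> zerov m \<Longrightarrow> \<exists>j<m. z ! j"
  by (auto simp: bvecs_def list_eq_iff_nth_eq)

lemma bvecs_eq_lists: "bvecs n = {xs. set xs \<subseteq> (UNIV :: bool set) \<and> length xs = n}"
  by (simp add: bvecs_def)

lemma finite_bvecs [simp]: "finite (bvecs n)"
  using finite_lists_length_eq[of "UNIV :: bool set" n] by (simp only: bvecs_eq_lists) simp

lemma card_bvecs: "card (bvecs n) = 2 ^ n"
  using card_lists_length_eq[of "UNIV :: bool set" n] by (simp only: bvecs_eq_lists) simp

subsection \<open>Balance\<close>

lemma half_card_if_flip_negates:
  assumes "j < n" and flip: "\<And>x. x \<in> bvecs n \<Longrightarrow> P (x[j := \<not> x ! j]) = (\<not> P x)"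
  shows "2 * card {x \<in> bvecs n. P x} = 2 ^ n"
proof -
  let ?fl = "\<lambda>x::bool list. x[j := \<not> x ! j]"
  have inv: "?fl (?fl x) = x" if "x \<in> bvecs n" for x
    using that \<open>j < n\<close> by (auto simp: bvecs_def list_eq_iff_nth_eq nth_list_update)
  have "bij_betw ?fl {x \<in> bvecs n. P x} {x \<in> bvecs n. \<not> P x}"
    by (rule bij_betw_byWitness[where f' = ?fl]) (use inv flip in \<open>auto simp: bvecs_def\<close>)
  hence "card {x \<in> bvecs n. P x} = card {x \<in> bvecs n. \<not> P x}"
    by (rule bij_betw_same_card)
  moreover have "card {x \<in> bvecs n. P x} + card {x \<in> bvecs n. \<not> P x} = card (bvecs n)"
    by (subst card_Un_disjoint[symmetric]) (auto intro: arg_cong[where f = card])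
  ultimately show ?thesis using card_bvecs by simp
qed

lemma y_balanced_if_linear_form_of_take:
  assumes "m \<le> n" and z: "z \<in> bvecs m" "z \<noteq> zerov m"
    and F: "\<And>x. x \<in> bvecs n \<Longrightarrow> dotp (F x) y = dotp (take m x) z"
  shows "y_balanced n F y"
proof -
  have lz: "length z = m" using z by (simp add: bvecs_def)
  obtain j where j: "j < m" "z ! j" using nonzero_has_True z by blast
  have flip: "dotp (take m (x[j := \<not> x ! j])) z = (\<not> dotp (take m x) z)" if "x \<in> bvecs n" for x
  proof -
    have lt: "length (take m x) = m" using that \<open>m \<le> n\<close> by (simp add: bvecs_def)
    have "take m (x[j := \<not> x ! j]) = xorv (take m x) (unitv m j)"
      using j flip_eq_xorv_unitv[OF lt j(1)] by (simp add: take_update_swap)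
    thus ?thesis using dotp_xorv_left[of "take m x" "unitv m j" z] lt lz dotp_unitv_left[OF lz j(1)] j
      by simp
  qed
  have "{x \<in> bvecs n. dotp (F x) y} = {x \<in> bvecs n. dotp (take m x) z}"
    using F by blast
  moreover have "2 * card {x \<in> bvecs n. dotp (take m x) z} = 2 ^ n"
    by (rule half_card_if_flip_negates) (use j \<open>m \<le> n\<close> flip in auto)
  ultimately show ?thesis by (simp add: y_balanced_def)
qed

lemma y_constant_linear_form_of_take_iff:
  assumes "m \<le> n" and z: "z \<in> bvecs m"
    and F: "\<And>x. x \<in> bvecs n \<Longrightarrow> dotp (F x) y = dotp (take m x) z"
  shows "y_constant n F y \<longleftrightarrow> z = zerov m"
proof
  assume const: "y_constant n F y"
  show "z = zerov m"
  proof (rule ccontr)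
    assume "z \<noteq> zerov m"
    then obtain j where j: "j < m" "z ! j" using nonzero_has_True z by blast
    have lz: "length z = m" using z by (simp add: bvecs_def)
    let ?x0 = "replicate n False" and ?x1 = "(replicate n False)[j := True]"
    have x: "?x0 \<in> bvecs n" "?x1 \<in> bvecs n" by (auto simp: bvecs_def)
    have "take m ?x1 = unitv m j" using j \<open>m \<le> n\<close> by (simp add: take_update_swap unitv_def)
    hence "dotp (F ?x1) y \<noteq> dotp (F ?x0) y"
      using F[OF x(1)] F[OF x(2)] dotp_unitv_left[OF lz j(1)] j by simp
    thus False using const x unfolding y_constant_def by blast
  qed
qed (use F in \<open>simp add: y_constant_def\<close>)

lemma image_take_bvecs: "m \<le> n \<Longrightarrow> take m ` bvecs n = bvecs m"
proof
  assume "m \<le> n"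
  show "bvecs m \<subseteq> take m ` bvecs n"
  proof
    fix v assume "v \<in> bvecs m"
    hence "v = take m (v @ replicate (n - m) False)" "v @ replicate (n - m) False \<in> bvecs n"
      using \<open>m \<le> n\<close> by (auto simp: bvecs_def)
    thus "v \<in> take m ` bvecs n" by blast
  qed
qed (auto simp: bvecs_def)

lemma linear_map_of_take:
  assumes "m \<le> n"
    and L: "\<And>v. v \<in> bvecs m \<Longrightarrow> L v \<in> bvecs m" and L': "\<And>y. y \<in> bvecs m \<Longrightarrow> L' y \<in> bvecs m"
    and adj: "\<And>v y. v \<in> bvecs m \<Longrightarrow> y \<in> bvecs m \<Longrightarrow> dotp (L v) y = dotp v (L' y)"
  shows "fully_balanced n m (\<lambda>x. L (take m x))"
    and "constset n m (\<lambda>x. L (take m x)) = {y \<in> bvecs m. L' y = zerov m}"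
    and "img n (\<lambda>x. L (take m x)) = L ` bvecs m"
proof -
  have take: "take m x \<in> bvecs m" if "x \<in> bvecs n" for x
    using that \<open>m \<le> n\<close> by (simp add: bvecs_def)
  have form: "dotp (L (take m x)) y = dotp (take m x) (L' y)" if "x \<in> bvecs n" "y \<in> bvecs m" for x y
    using adj take that by blast
  note bal = y_balanced_if_linear_form_of_take[OF \<open>m \<le> n\<close> L' _ form]
  note const = y_constant_linear_form_of_take_iff[OF \<open>m \<le> n\<close> L' form]
  show "fully_balanced n m (\<lambda>x. L (take m x))"
    unfolding fully_balanced_def using L take bal const by blast
  show "constset n m (\<lambda>x. L (take m x)) = {y \<in> bvecs m. L' y = zerov m}"
    unfolding constset_def using const by blast
  show "img n (\<lambda>x. L (take m x)) = L ` bvecs m"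
    unfolding img_def image_take_bvecs[OF \<open>m \<le> n\<close>, symmetric] by (rule image_image[symmetric])
qed

subsection \<open>Subspaces and dimension\<close>

definition subsp :: "nat \<Rightarrow> bool list set \<Rightarrow> bool" where
  "subsp m V \<longleftrightarrow> V \<subseteq> bvecs m \<and> zerov m \<in> V \<and> (\<forall>u\<in>V. \<forall>v\<in>V. xorv u v \<in> V)"

text \<open>The XOR-sum of a finite set of vectors; f2_indep says it is nonzero on nonempty subsets.\<close>

definition sumv :: "nat \<Rightarrow> bool list set \<Rightarrow> bool list" where
  "sumv m T = map (\<lambda>i. odd (card {v \<in> T. v ! i})) [0..<m]"

lemma sumv_empty: "sumv m {} = zerov m"
  by (simp add: sumv_def map_replicate_const)

lemma sumv_insert:
  assumes "finite T" "v \<notin> T" "length v = m"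
  shows "sumv m (insert v T) = xorv (sumv m T) v"
proof (rule nth_equalityI)
  show "length (sumv m (insert v T)) = length (xorv (sumv m T) v)"
    using assms(3) by (simp add: sumv_def)
  fix i assume "i < length (sumv m (insert v T))"
  hence i: "i < m" by (simp add: sumv_def)
  have "card {w \<in> insert v T. w ! i} = card {w \<in> T. w ! i} + (if v ! i then 1 else 0)"
  proof (cases "v ! i")
    case True
    hence "{w \<in> insert v T. w ! i} = insert v {w \<in> T. w ! i}" by auto
    thus ?thesis using True assms by simp
  next
    case False
    hence "{w \<in> insert v T. w ! i} = {w \<in> T. w ! i}" by auto
    thus ?thesis using False by simp
  qed
  thus "sumv m (insert v T) ! i = xorv (sumv m T) v ! i"
    using i assms(3) by (simp add: sumv_def xorv_def)
qed

lemma sumv_in_subsp: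
  assumes "subsp m V"
  shows "finite T \<Longrightarrow> T \<subseteq> V \<Longrightarrow> sumv m T \<in> V"
proof (induction T rule: finite_induct)
  case empty thus ?case using assms by (simp add: sumv_empty subsp_def)
next
  case (insert v T)
  hence "length v = m" using assms by (auto simp: subsp_def bvecs_def)
  thus ?case using insert assms by (simp add: sumv_insert subsp_def)
qed

lemma odd_card_symdiff:
  assumes "finite A" "finite B"
  shows "odd (card ((A - B) \<union> (B - A))) = (odd (card A) \<noteq> odd (card B))"
proof -
  have "card ((A - B) \<union> (B - A)) = card (A - B) + card (B - A)"
    using assms by (intro card_Un_disjoint) auto
  moreover have "card (A - B) = card A - card (A \<inter> B)" "card (B - A) = card B - card (A \<inter> B)"
    using assms by (simp_all add: card_Diff_subset_Int Diff_Int2 inf_commute)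
  moreover have "card (A \<inter> B) \<le> card A" "card (A \<inter> B) \<le> card B"
    using assms by (auto intro: card_mono)
  ultimately show ?thesis by presburger
qed

lemma inj_on_sumv_Pow:
  assumes "f2_indep m S"
  shows "inj_on (sumv m) (Pow S)"
proof (rule inj_onI, rule ccontr)
  fix T1 T2 assume T: "T1 \<in> Pow S" "T2 \<in> Pow S" "sumv m T1 = sumv m T2" "T1 \<noteq> T2"
  have f: "finite T1" "finite T2"
    using T assms by (auto simp: f2_indep_def intro: finite_subset)
  let ?D = "(T1 - T2) \<union> (T2 - T1)"
  have "?D \<subseteq> S" "?D \<noteq> {}" using T by auto
  then obtain i where i: "i < m" "odd (card {v \<in> ?D. v ! i})"
    using assms unfolding f2_indep_def by blast
  have "odd (card {v \<in> T1. v ! i}) = odd (card {v \<in> T2. v ! i})"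
    using arg_cong[OF T(3), of "\<lambda>s. s ! i"] i(1) by (simp add: sumv_def)
  moreover have "{v \<in> ?D. v ! i} = ({v \<in> T1. v ! i} - {v \<in> T2. v ! i}) \<union> ({v \<in> T2. v ! i} - {v \<in> T1. v ! i})"
    by auto
  ultimately show False using i(2) odd_card_symdiff[of "{v \<in> T1. v ! i}" "{v \<in> T2. v ! i}"] f by simp
qed

lemma two_pow_card_indep_le:
  assumes "subsp m V" "f2_indep m S" "S \<subseteq> V"
  shows "2 ^ card S \<le> card V"
proof -
  have fS: "finite S" using assms by (simp add: f2_indep_def)
  have fV: "finite V" using assms(1) unfolding subsp_def by (meson finite_bvecs finite_subset)
  have "card (Pow S) \<le> card V"
    by (rule card_inj_on_le[OF inj_on_sumv_Pow[OF assms(2)]])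
      (use sumv_in_subsp[OF assms(1)] assms(3) fS fV in \<open>auto intro: finite_subset\<close>)
  thus ?thesis using fS by (simp add: card_Pow)
qed

lemma f2_dim_eqI:
  assumes "subsp m V" "card V = 2 ^ d" "S0 \<subseteq> V" "f2_indep m S0" "card S0 = d"
  shows "f2_dim m V = d"
proof -
  have le: "card S \<le> d" if "S \<subseteq> V" "f2_indep m S" for S
    using two_pow_card_indep_le[OF assms(1) that(2,1)] assms(2) power_le_imp_le_exp by fastforce
  have "finite {card S | S. S \<subseteq> V \<and> f2_indep m S}"
    by (rule finite_subset[of _ "{..d}"]) (use le in auto)
  thus ?thesis unfolding f2_dim_def
    by (rule Max_eqI) (use assms le in auto)
qed

lemma aff_dim_subsp: "subsp m V \<Longrightarrow> aff_dim m V = f2_dim m V"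
proof -
  assume s: "subsp m V"
  have "{xorv u v | u v. u \<in> V \<and> v \<in> V} = V"
  proof
    show "V \<subseteq> {xorv u v | u v. u \<in> V \<and> v \<in> V}"
    proof
      fix u assume u: "u \<in> V"
      hence "u = xorv u (zerov m)" using s by (auto simp: subsp_def bvecs_def)
      thus "u \<in> {xorv u v | u v. u \<in> V \<and> v \<in> V}" using u s by (auto simp: subsp_def)
    qed
  qed (use s in \<open>auto simp: subsp_def\<close>)
  thus ?thesis by (simp add: aff_dim_def)
qed

lemma f2_indep_image_diagonal:
  assumes "J \<subseteq> {..<m}" and diag: "\<And>j k. j \<in> J \<Longrightarrow> k \<in> J \<Longrightarrow> b j ! k = (k = j)"
  shows "f2_indep m (b ` J)" and "card (b ` J) = card J"
proof -
  have "inj_on b J"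
    by (rule inj_onI) (metis diag)
  thus "card (b ` J) = card J" by (rule card_image)
  show "f2_indep m (b ` J)" unfolding f2_indep_def
  proof (intro conjI allI impI)
    show "finite (b ` J)" using assms(1) finite_subset by blast
    fix T assume T: "T \<subseteq> b ` J" "T \<noteq> {}"
    then obtain j where j: "j \<in> J" "b j \<in> T" by blast
    have "{v \<in> T. v ! j} = {b j}" using T(1) diag j by auto
    thus "\<exists>i<m. odd (card {v \<in> T. v ! i})" using j assms(1) by auto
  qed
qed

lemma aff_dim_bvecs: "aff_dim m (bvecs m) = m"
proof -
  have sub: "subsp m (bvecs m)" by (auto simp: subsp_def bvecs_def)
  have "f2_indep m (unitv m ` {..<m})" "card (unitv m ` {..<m}) = m"
    using f2_indep_image_diagonal[of "{..<m}" m "unitv m"] by (auto simp: nth_unitv)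
  hence "f2_dim m (bvecs m) = m"
    by (intro f2_dim_eqI[OF sub card_bvecs]) (auto simp: bvecs_def)
  thus ?thesis using aff_dim_subsp[OF sub] by simp
qed

definition hyperplane :: "nat \<Rightarrow> bool list \<Rightarrow> bool list set" where
  "hyperplane m y0 = {v \<in> bvecs m. \<not> dotp v y0}"

lemma subsp_hyperplane: "y0 \<in> bvecs m \<Longrightarrow> subsp m (hyperplane m y0)"
  by (auto simp: subsp_def hyperplane_def bvecs_def dotp_xorv_left)

lemma card_hyperplane:
  assumes y0: "y0 \<in> bvecs m" and i: "i < m" "y0 ! i"
  shows "card (hyperplane m y0) = 2 ^ (m - 1)"
proof -
  have ly: "length y0 = m" using y0 by (simp add: bvecs_def)
  have "2 * card (hyperplane m y0) = 2 ^ m"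
    unfolding hyperplane_def
  proof (rule half_card_if_flip_negates[OF i(1)])
    fix x assume "x \<in> bvecs m"
    hence lx: "length x = m" by (simp add: bvecs_def)
    show "(\<not> dotp (x[i := \<not> x ! i]) y0) = (\<not> \<not> dotp x y0)"
      using flip_eq_xorv_unitv[OF lx i(1)] dotp_xorv_left[of x "unitv m i" y0] lx ly
        dotp_unitv_left[OF ly i(1)] i(2)
      by simp
  qed
  thus ?thesis using i(1) by (cases m) auto
qed

lemma aff_dim_hyperplane:
  assumes y0: "y0 \<in> bvecs m" and i: "i < m" "y0 ! i"
  shows "aff_dim m (hyperplane m y0) = m - 1"
proof -
  let ?H = "hyperplane m y0"
  have ly: "length y0 = m" using y0 by (simp add: bvecs_def)
  text \<open>Basis: e_j for j \<noteq> i, corrected in coordinate i to lie in the hyperplane.\<close>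
  define b where "b j = (unitv m j)[i := y0 ! j]" for j
  let ?J = "{..<m} - {i}"
  have diag: "b j ! k = (k = j)" if "j \<in> ?J" "k \<in> ?J" for j k
    using that by (auto simp: b_def nth_list_update nth_unitv)
  have "b j \<in> ?H" if j: "j \<in> ?J" for j
  proof -
    have "{k. k < length (b j) \<and> b j ! k \<and> y0 ! k} = (if y0 ! j then {i, j} else {})"
      using j i by (auto simp: b_def nth_list_update nth_unitv)
    thus ?thesis using j ly by (simp add: dotp_eq_odd_card b_def hyperplane_def bvecs_def)
  qed
  moreover have "f2_indep m (b ` ?J)" "card (b ` ?J) = card ?J"
    using f2_indep_image_diagonal[of ?J m b] diag by auto
  ultimately have "f2_dim m ?H = m - 1"
    using f2_dim_eqI[OF subsp_hyperplane[OF y0] card_hyperplane[OF y0 i], of "b ` ?J"] i(1) by auto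
  thus ?thesis using aff_dim_subsp[OF subsp_hyperplane[OF y0]] by simp
qed

subsection \<open>Projection onto a hyperplane\<close>

text \<open>For y0 ! i = True: the projection of F_2^m onto the hyperplane y0^\<bottom> along e_i, and its adjoint.\<close>

definition hyperplane_proj :: "nat \<Rightarrow> bool list \<Rightarrow> nat \<Rightarrow> bool list \<Rightarrow> bool list" where
  "hyperplane_proj m y0 i v = xorv v (if dotp v y0 then unitv m i else zerov m)"

definition hyperplane_proj_adj :: "bool list \<Rightarrow> nat \<Rightarrow> bool list \<Rightarrow> bool list" where
  "hyperplane_proj_adj y0 i y = (if y ! i then xorv y y0 else y)"

context
  fixes m i :: nat and y0 :: "bool list"
  assumes y0: "y0 \<in> bvecs m" and i: "i < m" "y0 ! i"
begin

private lemma length_y0: "length y0 = m"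
  using y0 by (simp add: bvecs_def)

lemma dotp_hyperplane_proj:
  assumes "v \<in> bvecs m" "y \<in> bvecs m"
  shows "dotp (hyperplane_proj m y0 i v) y = (dotp v y \<noteq> (dotp v y0 \<and> y ! i))"
  using assms i by (auto simp: hyperplane_proj_def bvecs_def dotp_xorv_left dotp_unitv_left)

lemma hyperplane_proj_in_hyperplane: "v \<in> bvecs m \<Longrightarrow> hyperplane_proj m y0 i v \<in> hyperplane m y0"
  using dotp_hyperplane_proj[OF _ y0] i length_y0
  by (auto simp: hyperplane_def hyperplane_proj_def bvecs_def)

lemma hyperplane_proj_in_bvecs: "v \<in> bvecs m \<Longrightarrow> hyperplane_proj m y0 i v \<in> bvecs m"
  using hyperplane_proj_in_hyperplane by (simp add: hyperplane_def)

lemma image_hyperplane_proj: "hyperplane_proj m y0 i ` bvecs m = hyperplane m y0"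
proof
  show "hyperplane m y0 \<subseteq> hyperplane_proj m y0 i ` bvecs m"
  proof
    fix v assume "v \<in> hyperplane m y0"
    hence "v = hyperplane_proj m y0 i v" "v \<in> bvecs m"
      by (auto simp: hyperplane_def hyperplane_proj_def bvecs_def)
    thus "v \<in> hyperplane_proj m y0 i ` bvecs m" by blast
  qed
qed (use hyperplane_proj_in_hyperplane in blast)

lemma dotp_hyperplane_proj_adj:
  "v \<in> bvecs m \<Longrightarrow> y \<in> bvecs m \<Longrightarrow>
    dotp (hyperplane_proj m y0 i v) y = dotp v (hyperplane_proj_adj y0 i y)"
  using length_y0 by (auto simp: dotp_hyperplane_proj hyperplane_proj_adj_def bvecs_def dotp_xorv_right)

lemma hyperplane_proj_adj_in_bvecs: "y \<in> bvecs m \<Longrightarrow> hyperplane_proj_adj y0 i y \<in> bvecs m"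
  using length_y0 by (auto simp: hyperplane_proj_adj_def bvecs_def)

lemma hyperplane_proj_adj_eq_zerov_iff:
  assumes "y \<in> bvecs m"
  shows "hyperplane_proj_adj y0 i y = zerov m \<longleftrightarrow> y = zerov m \<or> y = y0"
proof (cases "y ! i")
  case True
  have "length y = m" using assms by (simp add: bvecs_def)
  moreover have "y \<noteq> zerov m" using True i by auto
  ultimately show ?thesis
    using True xorv_eq_zerov_iff[of y y0] length_y0 by (simp add: hyperplane_proj_adj_def)
next
  case False
  hence "y \<noteq> y0" using i by auto
  thus ?thesis using False by (simp add: hyperplane_proj_adj_def)
qed

end

subsection \<open>Query transcripts\<close>

lemma transcript_cong:
  "\<forall>p \<in> set (transcript A orc k h). orc (fst p) = orc' (fst p) \<Longrightarrow>
    transcript A orc k h = transcript A orc' k h"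
proof (induction k arbitrary: h)
  case (Suc k) thus ?case by (cases "A h") auto
qed simp

lemma length_transcript_le: "length (transcript A orc k h) \<le> k"
proof (induction k arbitrary: h)
  case (Suc k) thus ?case by (cases "A h") auto
qed simp

lemma transcript_query_issued: "p \<in> set (transcript A orc k h) \<Longrightarrow> \<exists>h'. A h' = Some (fst p)"
proof (induction k arbitrary: h)
  case (Suc k) thus ?case by (cases "A h") auto
qed simp

lemma transcript_misses_nonzero:
  assumes "m \<ge> 1" and A: "\<And>h y. A h = Some y \<Longrightarrow> y \<in> bvecs m"
  shows "\<exists>y0 \<in> bvecs m. y0 \<noteq> zerov m \<and> y0 \<notin> fst ` set (transcript A orc (2 ^ m - 2) h)"
proof (rule ccontr)
  let ?Q = "fst ` set (transcript A orc (2 ^ m - 2) h)"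
  assume "\<not> ?thesis"
  hence "bvecs m - {zerov m} \<subseteq> ?Q" by blast
  moreover have "?Q \<subseteq> bvecs m" using transcript_query_issued A by fastforce
  ultimately have "card (bvecs m - {zerov m}) \<le> card ?Q"
    by (meson card_mono finite_bvecs finite_subset)
  also have "\<dots> \<le> 2 ^ m - 2"
    by (meson card_image_le card_length List.finite_set le_trans length_transcript_le)
  finally have "2 ^ m - 1 \<le> (2::nat) ^ m - 2"
    by (simp add: card_Diff_singleton card_bvecs)
  moreover have "(2::nat) ^ m \<ge> 2" using power_increasing[OF \<open>m \<ge> 1\<close>, of "2::nat"] by simp
  ultimately show False by linarith
qed

theorem mainTheorem11:
  fixes m n :: nat and A :: "bool list \<Rightarrow> bool list option"
  assumes "m \<ge> 1" and "n \<ge> m"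
    and "\<And>h y. A h = Some y \<Longrightarrow> y \<in> bvecs m"
  shows "\<exists>f g. fully_balanced n m f \<and> fully_balanced n m g
     \<and> aff_dim m (img n f) = m \<and> aff_dim m (img n g) = m - 1
     \<and> transcript A (\<lambda>y. y \<in> constset n m f) (2 ^ m - 2) []
       = transcript A (\<lambda>y. y \<in> constset n m g) (2 ^ m - 2) []"
proof -
  define f :: "bool list \<Rightarrow> bool list" where "f = take m"
  obtain y0 where y0: "y0 \<in> bvecs m" "y0 \<noteq> zerov m"
    and unasked: "y0 \<notin> fst ` set (transcript A (\<lambda>y. y \<in> constset n m f) (2 ^ m - 2) [])"
    using transcript_misses_nonzero[of m A] assms(1,3) by blast
  obtain i where i: "i < m" "y0 ! i" using nonzero_has_True[OF y0] by blast
  define g where "g = (\<lambda>x. hyperplane_proj m y0 i (take m x))"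
  have F: "fully_balanced n m f" "constset n m f = {zerov m}" "img n f = bvecs m"
    using linear_map_of_take[OF \<open>n \<ge> m\<close>, of "\<lambda>v. v" "\<lambda>y. y"] unfolding f_def by auto
  note G = linear_map_of_take[OF \<open>n \<ge> m\<close> hyperplane_proj_in_bvecs[OF y0(1) i]
      hyperplane_proj_adj_in_bvecs[OF y0(1) i] dotp_hyperplane_proj_adj[OF y0(1) i], folded g_def]
  have "constset n m g = {zerov m, y0}"
    using G(2) hyperplane_proj_adj_eq_zerov_iff[OF y0(1) i] y0(1) by auto
  hence "transcript A (\<lambda>y. y \<in> constset n m f) (2 ^ m - 2) []
       = transcript A (\<lambda>y. y \<in> constset n m g) (2 ^ m - 2) []"
    using F(2) unasked by (intro transcript_cong ballI) (metis image_eqI insert_iff)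
  moreover have "aff_dim m (img n f) = m"
    using F(3) aff_dim_bvecs by simp
  moreover have "aff_dim m (img n g) = m - 1"
    using G(3) image_hyperplane_proj[OF y0(1) i] aff_dim_hyperplane[OF y0(1) i] by simp
  ultimately show ?thesis
    using F(1) G(1) by blast
qed

end
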